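(* Consider the Byzantine-resilient state estimation algorithm described in the context, run on a complete communication graph on $n$ agents with trimming parameter $b$, where $n>2b$, and let ${\mathcal{A}}$ be the set of Byzantine agents with $|{\mathcal{A}}|\le b$ and $\phi=|{\mathcal{V}}\setminus{\mathcal{A}}|$. Then for each iteration $t\ge 1$, each good agent $i\in{\mathcal{V}}\setminus{\mathcal{A}}$ and each coordinate $k\in\{1,\dots,d\}$, there exist coefficients $(\beta_{ij}^k(t))_{j\in{\mathcal{V}}\setminus{\mathcal{A}}}$ such that (i) $x_i^k(t)=\sum_{j\in{\mathcal{V}}\setminus{\mathcal{A}}}\beta_{ij}^k(t)\,\langle z_j(t),e_k\rangle$; and (ii) $0\le \beta_{ij}^k(t)\le \frac{1}{\phi-b}$ for all $j\in{\mathcal{V}}\setminus{\mathcal{A}}$, and $\sum_{j\in{\mathcal{V}}\setminus{\mathcal{A}}}\beta_{ij}^k(t)=1$.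
   Context: Agents ${\mathcal{V}}=\{1,\dots,n\}$ communicate over a directed graph $G=({\mathcal{V}},{\mathcal{E}})$; ${\mathcal{N}}_i$ denotes the set of incoming neighbors of $i$ (here $G$ is complete, so ${\mathcal{N}}_i\cup\{i\}={\mathcal{V}}$). There is an unknown vector $\theta^*\in\mathbb{R}^d$. Agent $i$ has a matrix $H_i\in\mathbb{R}^{n_i\times d}$ and at each time $t=1,2,\dots$ obtains $y_i(t)=H_i\theta^*+w_i(t)$. An unknown set ${\mathcal{A}}\subseteq{\mathcal{V}}$ of Byzantine agents with $|{\mathcal{A}}|\le b$ is chosen by an adversary; $b$ is known to all agents. Byzantine agents may send arbitrary vectors, possibly different vectors to different recipients. $e_k$ is the $k$-th standard basis vector of $\mathbb{R}^d$. Algorithm (run by each good agent $i\in{\mathcal{V}}\setminus{\mathcal{A}}$): $x_i(0)\in\mathbb{R}^d$ is arbitrary. At iteration $t\ge1$: compute $z_i(t)=x_i(t-1)-H_i^\top\big(H_i x_i(t-1)-\frac1t\sum_{r=1}^t y_i(r)\big)$; send $z_i(t)$ to all out-neighbors; agent $i$ receives $m_{ji}(t)\in\mathbb{R}^d$ from each $j\in{\mathcal{N}}_i$, where $m_{ji}(t)=z_j(t)$ if $j\notin{\mathcal{A}}$ and $m_{ji}(t)$ is arbitrary if $j\in{\mathcal{A}}$, and sets $m_{ii}(t)=z_i(t)$. For each $k=1,\dots,d$: sort the values $\langle m_{ji}(t),e_k\rangle$, $j\in{\mathcal{N}}_i\cup\{i\}$, in non-decreasing order, remove the $b$ largest and the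 $b$ smallest values, let ${\mathcal{R}}_i^k(t)$ be the set of indices of the remaining values, and set $x_i^k(t)=\frac{1}{|{\mathcal{R}}_i^k(t)|}\sum_{j\in{\mathcal{R}}_i^k(t)}\langle m_{ji}(t),e_k\rangle$. Then $x_i(t)=(x_i^1(t),\dots,x_i^d(t))^\top$. *)

theory Defs
  imports Complex_Main
begin

definition trimmed_mean :: "nat \<Rightarrow> real list \<Rightarrow> real" where
  "trimmed_mean b xs =
     (let ys = drop b (take (length xs - b) (sort xs)) in sum_list ys / real (length ys))"

end

theory Submission
  imports Defs "HOL-Library.Multiset"
begin

(* Let ys be the sorted values of the phi good agents and K = phi - b. At most n - phi \<le> b values
   are Byzantine, so the sorted list of all n values interlaces with ys: its p-th entry lies between
   ys ! (p - (n - phi)) and ys ! p. Hence the n - 2b values surviving the trimming are dominated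
   entrywise by a block of n - 2b consecutive good values starting at b, and dominate the block ending
   at K. Since dropping the smallest (largest) entries of a sorted list raises (lowers) its mean, the
   trimmed mean lies between the mean of the K smallest and the mean of the K largest good values.
   Both are convex combinations of the good values with weights at most 1/K, and such combinations
   form an interval, which therefore contains the trimmed mean. *)

lemma sorted_nth_le_iff_length_filter:
  fixes xs :: "'a::linorder list"
  assumes "sorted xs" "p < length xs"
  shows "xs ! p \<le> a \<longleftrightarrow> p < length (filter (\<lambda>x. x \<le> a) xs)"
proof
  assume "xs ! p \<le> a"
  then have "xs ! q \<le> a" if "q \<le> p" for q
    using sorted_nth_mono[OF assms(1) that assms(2)] by simp
  then have "\<forall>x\<in>set (take (Suc p) xs). x \<le> a"
    by (auto simp: in_set_conv_nth)
  then have "filter (\<lambda>x. x \<le> a) (take (Suc p) xs) = take (Suc p) xs"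
    by simp
  then have "Suc p \<le> length (filter (\<lambda>x. x \<le> a) (take (Suc p) xs))"
    using assms(2) by simp
  also have "\<dots> \<le> length (filter (\<lambda>x. x \<le> a) xs)"
    by (metis append_take_drop_id filter_append length_append le_add1)
  finally show "p < length (filter (\<lambda>x. x \<le> a) xs)" by simp
next
  assume filter_long: "p < length (filter (\<lambda>x. x \<le> a) xs)"
  show "xs ! p \<le> a"
  proof (rule ccontr)
    assume "\<not> xs ! p \<le> a"
    then have "\<not> xs ! q \<le> a" if "p \<le> q" "q < length xs" for q
      using sorted_nth_mono[OF assms(1) that] by simp
    then have "\<forall>x\<in>set (drop p xs). \<not> x \<le> a"
      by (auto simp: in_set_conv_nth)
    then have "filter (\<lambda>x. x \<le> a) xs = filter (\<lambda>x. x \<le> a) (take p xs)"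
      by (metis append_take_drop_id filter_append filter_False append_Nil2)
    then have "length (filter (\<lambda>x. x \<le> a) xs) \<le> p"
      by (metis length_filter_le length_take min.bounded_iff)
    with filter_long show False by simp
  qed
qed

lemma length_filter_subset_mset:
  assumes "mset ys \<subseteq># mset xs"
  shows "length (filter P ys) \<le> length (filter P xs)"
    and "length (filter P xs) \<le> length (filter P ys) + (length xs - length ys)"
proof -
  obtain D where D: "mset xs = mset ys + D"
    using assms by (metis subset_mset.le_iff_add)
  then have "size D = length xs - length ys"
    by (metis add_diff_cancel_left' size_Diff_submset size_mset assms)
  moreover have "length (filter P xs) = length (filter P ys) + size (filter_mset P D)"
    by (metis D filter_union_mset mset_filter size_mset size_union)
  ultimately show "length (filter P ys) \<le> length (filter P xs)"
    and "length (filter P xs) \<le> length (filter P ys) + (length xs - length ys)"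
    using size_filter_mset_lesseq[of P D] by linarith+
qed

lemma sorted_subset_mset_nth_le:
  fixes xs ys :: "'a::linorder list"
  assumes "sorted xs" "sorted ys" "mset ys \<subseteq># mset xs" "p < length ys"
  shows "xs ! p \<le> ys ! p"
proof -
  have "length ys \<le> length xs"
    using assms(3) by (metis size_mset size_mset_mono)
  have "p < length (filter (\<lambda>y. y \<le> ys ! p) ys)"
    using sorted_nth_le_iff_length_filter[OF assms(2,4), of "ys ! p"] by simp
  also have "\<dots> \<le> length (filter (\<lambda>x. x \<le> ys ! p) xs)"
    using length_filter_subset_mset(1)[OF assms(3)] .
  finally show ?thesis
    using sorted_nth_le_iff_length_filter[OF assms(1)] assms(4) \<open>length ys \<le> length xs\<close>
    by simp
qed

lemma sorted_subset_mset_nth_ge: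
  fixes xs ys :: "'a::linorder list"
  assumes "sorted xs" "sorted ys" "mset ys \<subseteq># mset xs" "p < length ys"
  shows "ys ! p \<le> xs ! (p + (length xs - length ys))"
proof -
  let ?e = "length xs - length ys" and ?a = "xs ! (p + (length xs - length ys))"
  have "length ys \<le> length xs"
    using assms(3) by (metis size_mset size_mset_mono)
  then have "p + ?e < length xs"
    using assms(4) by simp
  then have "p + ?e < length (filter (\<lambda>x. x \<le> ?a) xs)"
    using sorted_nth_le_iff_length_filter[OF assms(1), of "p + ?e" ?a] by simp
  also have "\<dots> \<le> length (filter (\<lambda>y. y \<le> ?a) ys) + ?e"
    using length_filter_subset_mset(2)[OF assms(3)] .
  finally show ?thesis
    using sorted_nth_le_iff_length_filter[OF assms(2,4)] by simp
qed

definition list_mean :: "real list \<Rightarrow> real" where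
  "list_mean xs = sum_list xs / real (length xs)"

lemma trimmed_mean_eq_list_mean:
  "trimmed_mean b xs = list_mean (drop b (take (length xs - b) (sort xs)))"
  by (simp add: trimmed_mean_def list_mean_def Let_def)

lemma list_mean_mono:
  assumes "length xs = length ys" "\<And>i. i < length xs \<Longrightarrow> xs ! i \<le> ys ! i"
  shows "list_mean xs \<le> list_mean ys"
  using sum_list_mono2[of xs ys] assms by (simp add: list_mean_def divide_right_mono)

lemma sorted_append_list_mean:
  assumes "sorted (xs @ ys)" "xs \<noteq> []" "ys \<noteq> []"
  shows "list_mean xs \<le> list_mean (xs @ ys)" "list_mean (xs @ ys) \<le> list_mean ys"
proof -
  obtain a ys' where ys: "ys = a # ys'"
    using assms(3) by (meson neq_Nil_conv)
  define p q where "p = real (length xs)" and "q = real (length ys)"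
  have "p > 0" "q > 0"
    using assms(2,3) by (simp_all add: p_def q_def)
  have "\<forall>x\<in>set xs. x \<le> a" "\<forall>y\<in>set ys. a \<le> y"
    using assms(1) by (auto simp: ys sorted_append)
  then have "sum_list xs \<le> p * a" "q * a \<le> sum_list ys"
    using sum_list_mono[of xs id "\<lambda>_. a"] sum_list_mono[of ys "\<lambda>_. a" id]
    by (simp_all add: p_def q_def sum_list_triv)
  then have key: "q * sum_list xs \<le> p * sum_list ys"
    using \<open>p > 0\<close> \<open>q > 0\<close>
    by (metis mult.left_commute mult_le_cancel_left_pos order_trans)
  have means: "list_mean xs = sum_list xs / p" "list_mean ys = sum_list ys / q"
    "list_mean (xs @ ys) = (sum_list xs + sum_list ys) / (p + q)"
    by (simp_all add: list_mean_def p_def q_def)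
  show "list_mean xs \<le> list_mean (xs @ ys)" "list_mean (xs @ ys) \<le> list_mean ys"
    unfolding means using key \<open>p > 0\<close> \<open>q > 0\<close> by (simp_all add: field_simps)
qed

lemma sorted_list_mean_take_le:
  assumes "sorted xs" "0 < m"
  shows "list_mean (take m xs) \<le> list_mean xs"
proof (cases "m < length xs")
  case True
  then have "xs \<noteq> []"
    by auto
  with True show ?thesis
    using sorted_append_list_mean(1)[of "take m xs" "drop m xs"] assms by auto
qed simp

lemma sorted_list_mean_le_list_mean_drop:
  assumes "sorted xs" "m < length xs"
  shows "list_mean xs \<le> list_mean (drop m xs)"
proof (cases "m = 0")
  case False
  have "xs \<noteq> []"
    using assms(2) by auto
  with False show ?thesis
    using sorted_append_list_mean(2)[of "take m xs" "drop m xs"] assms by auto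
qed simp

lemma list_mean_take_le_trimmed_mean:
  assumes ys: "sorted ys" "mset ys \<subseteq># mset xs"
    and len: "length xs \<le> length ys + b" "2 * b < length xs"
  shows "list_mean (take (length ys - b) ys) \<le> trimmed_mean b xs"
proof -
  have sub: "mset ys \<subseteq># mset (sort xs)"
    using ys(2) by simp
  have "length ys \<le> length xs"
    using ys(2) by (metis size_mset size_mset_mono)
  define l where "l = length ys + b - length xs"
  have "list_mean (take (length ys - b) ys) \<le> list_mean (drop l (take (length ys - b) ys))"
    using ys(1) len by (intro sorted_list_mean_le_list_mean_drop) (auto simp: l_def)
  also have "\<dots> \<le> list_mean (drop b (take (length xs - b) (sort xs)))"
  proof (rule list_mean_mono)
    fix r
    assume "r < length (drop l (take (length ys - b) ys))"
    then have idx: "l + r < length ys" "l + r + (length xs - length ys) = b + r"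
        "b + r < length xs - b"
      using len \<open>length ys \<le> length xs\<close> by (auto simp: l_def)
    then have "ys ! (l + r) \<le> sort xs ! (b + r)"
      using sorted_subset_mset_nth_ge[OF sorted_sort ys(1) sub idx(1)] idx(2) by simp
    then show "drop l (take (length ys - b) ys) ! r \<le> drop b (take (length xs - b) (sort xs)) ! r"
      using idx by (simp add: l_def)
  qed (use len in \<open>auto simp: l_def\<close>)
  also have "\<dots> = trimmed_mean b xs"
    by (simp add: trimmed_mean_eq_list_mean)
  finally show ?thesis .
qed

lemma trimmed_mean_le_list_mean_drop:
  assumes ys: "sorted ys" "mset ys \<subseteq># mset xs"
    and len: "length xs \<le> length ys + b" "2 * b < length xs"
  shows "trimmed_mean b xs \<le> list_mean (drop b ys)"
proof -
  have sub: "mset ys \<subseteq># mset (sort xs)"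
    using ys(2) by simp
  have "length ys \<le> length xs"
    using ys(2) by (metis size_mset size_mset_mono)
  have "trimmed_mean b xs = list_mean (drop b (take (length xs - b) (sort xs)))"
    by (simp add: trimmed_mean_eq_list_mean)
  also have "\<dots> \<le> list_mean (take (length xs - 2 * b) (drop b ys))"
  proof (rule list_mean_mono)
    fix r
    assume "r < length (drop b (take (length xs - b) (sort xs)))"
    then have "b + r < length ys" "r < length xs - 2 * b"
      using len by auto
    then show "drop b (take (length xs - b) (sort xs)) ! r \<le> take (length xs - 2 * b) (drop b ys) ! r"
      using sorted_subset_mset_nth_le[OF sorted_sort ys(1) sub, of "b + r"] len by simp
  qed (use len \<open>length ys \<le> length xs\<close> in auto)
  also have "\<dots> \<le> list_mean (drop b ys)"
    using ys(1) len by (intro sorted_list_mean_take_le) auto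
  finally show ?thesis .
qed

definition bounded_convex_combination :: "real \<Rightarrow> 'a set \<Rightarrow> ('a \<Rightarrow> real) \<Rightarrow> real \<Rightarrow> bool" where
  "bounded_convex_combination c G v u \<longleftrightarrow>
     (\<exists>\<beta>. u = (\<Sum>j\<in>G. \<beta> j * v j) \<and> (\<forall>j\<in>G. 0 \<le> \<beta> j \<and> \<beta> j \<le> c) \<and> (\<Sum>j\<in>G. \<beta> j) = 1)"

lemma bounded_convex_combination_list_mean:
  assumes "finite G" "distinct zs" "set zs \<subseteq> G" "zs \<noteq> []"
  shows "bounded_convex_combination (1 / real (length zs)) G v (list_mean (map v zs))"
  unfolding bounded_convex_combination_def
proof (intro exI conjI)
  let ?\<beta> = "\<lambda>j. if j \<in> set zs then 1 / real (length zs) else 0"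
  have G_inter: "G \<inter> set zs = set zs"
    using assms(3) by blast
  have "list_mean (map v zs) = (\<Sum>j\<in>G \<inter> set zs. v j / real (length zs))"
    using assms(2) by (simp add: list_mean_def sum_list_distinct_conv_sum_set G_inter sum_divide_distrib)
  also have "\<dots> = (\<Sum>j\<in>G. ?\<beta> j * v j)"
    using assms(1) by (auto simp: sum.inter_restrict intro!: sum.cong)
  finally show "list_mean (map v zs) = (\<Sum>j\<in>G. ?\<beta> j * v j)" .
  show "\<forall>j\<in>G. 0 \<le> ?\<beta> j \<and> ?\<beta> j \<le> 1 / real (length zs)"
    by simp
  show "(\<Sum>j\<in>G. ?\<beta> j) = 1"
    using assms by (simp add: sum.If_cases G_inter distinct_card)
qed

lemma bounded_convex_combination_between:
  assumes lo: "bounded_convex_combination c G v u\<^sub>1" and hi: "bounded_convex_combination c G v u\<^sub>2"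
    and "u\<^sub>1 \<le> u" "u \<le> u\<^sub>2"
  shows "bounded_convex_combination c G v u"
proof (cases "u\<^sub>1 = u\<^sub>2")
  case True
  with lo assms(3,4) show ?thesis by simp
next
  case False
  obtain \<beta>\<^sub>1 where \<beta>\<^sub>1: "u\<^sub>1 = (\<Sum>j\<in>G. \<beta>\<^sub>1 j * v j)" "\<forall>j\<in>G. 0 \<le> \<beta>\<^sub>1 j \<and> \<beta>\<^sub>1 j \<le> c"
      "(\<Sum>j\<in>G. \<beta>\<^sub>1 j) = 1"
    using lo unfolding bounded_convex_combination_def by blast
  obtain \<beta>\<^sub>2 where \<beta>\<^sub>2: "u\<^sub>2 = (\<Sum>j\<in>G. \<beta>\<^sub>2 j * v j)" "\<forall>j\<in>G. 0 \<le> \<beta>\<^sub>2 j \<and> \<beta>\<^sub>2 j \<le> c"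
      "(\<Sum>j\<in>G. \<beta>\<^sub>2 j) = 1"
    using hi unfolding bounded_convex_combination_def by blast
  define \<alpha> where "\<alpha> = (u - u\<^sub>1) / (u\<^sub>2 - u\<^sub>1)"
  have "u\<^sub>1 < u\<^sub>2"
    using False assms(3,4) by simp
  then have "0 \<le> \<alpha>" "\<alpha> \<le> 1" "\<alpha> * (u\<^sub>2 - u\<^sub>1) = u - u\<^sub>1"
    using assms(3,4) by (simp_all add: \<alpha>_def)
  then have \<alpha>: "0 \<le> \<alpha>" "\<alpha> \<le> 1" "u = (1 - \<alpha>) * u\<^sub>1 + \<alpha> * u\<^sub>2"
    by (simp_all add: algebra_simps)
  show ?thesis
    unfolding bounded_convex_combination_def
  proof (intro exI conjI ballI)
    let ?\<beta> = "\<lambda>j. (1 - \<alpha>) * \<beta>\<^sub>1 j + \<alpha> * \<beta>\<^sub>2 j"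
    have "(\<Sum>j\<in>G. ?\<beta> j * v j) = (1 - \<alpha>) * u\<^sub>1 + \<alpha> * u\<^sub>2"
      unfolding \<beta>\<^sub>1(1) \<beta>\<^sub>2(1) by (simp add: distrib_right sum.distrib sum_distrib_left mult.assoc)
    with \<alpha>(3) show "u = (\<Sum>j\<in>G. ?\<beta> j * v j)"
      by simp
    show "(\<Sum>j\<in>G. ?\<beta> j) = 1"
      using \<beta>\<^sub>1(3) \<beta>\<^sub>2(3) by (simp add: sum.distrib flip: sum_distrib_left)
    fix j
    assume "j \<in> G"
    then have "0 \<le> \<beta>\<^sub>1 j" "\<beta>\<^sub>1 j \<le> c" "0 \<le> \<beta>\<^sub>2 j" "\<beta>\<^sub>2 j \<le> c"
      using \<beta>\<^sub>1(2) \<beta>\<^sub>2(2) by auto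
    then show "0 \<le> ?\<beta> j" "?\<beta> j \<le> c"
      using \<alpha>(1,2) convex_bound_le[of "\<beta>\<^sub>1 j" c "\<beta>\<^sub>2 j" "1 - \<alpha>" \<alpha>] by simp_all
  qed
qed

lemma trimmed_mean_bounded_convex_combination:
  fixes v :: "nat \<Rightarrow> real"
  assumes G: "G \<subseteq> {..<n}" and n: "n \<le> card G + b" "2 * b < n"
  shows "bounded_convex_combination (1 / (real (card G) - real b)) G v
           (trimmed_mean b (map v [0..<n]))"
proof -
  have "finite G"
    using G finite_subset by blast
  define gl where "gl = sort_key v (sorted_list_of_set G)"
  have gl: "distinct gl" "set gl = G" "length gl = card G"
    using \<open>finite G\<close> by (simp_all add: gl_def)
  define ys where "ys = map v gl"
  have "sorted ys"
    by (simp add: ys_def gl_def)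
  have "mset ys \<subseteq># mset (map v [0..<n])"
  proof -
    have "mset ys = image_mset v (mset_set G)"
      using \<open>finite G\<close> by (simp add: ys_def gl_def flip: sorted_list_of_mset_set)
    moreover have "mset (map v [0..<n]) = image_mset v (mset_set {..<n})"
      by (simp add: lessThan_atLeast0 flip: mset_set_set)
    ultimately show ?thesis
      using G by (simp add: subset_imp_msubset_mset_set image_mset_subseteq_mono)
  qed
  define K where "K = card G - b"
  have K: "0 < K" "K \<le> length gl" "1 / (real (card G) - real b) = 1 / real K"
    using n gl(3) by (auto simp: K_def)
  then have "gl \<noteq> []"
    by auto
  have "list_mean (take K ys) \<le> trimmed_mean b (map v [0..<n])"
    using list_mean_take_le_trimmed_mean[OF \<open>sorted ys\<close> \<open>mset ys \<subseteq># _\<close>] n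
    by (simp add: K_def ys_def gl)
  moreover have "trimmed_mean b (map v [0..<n]) \<le> list_mean (drop b ys)"
    using trimmed_mean_le_list_mean_drop[OF \<open>sorted ys\<close> \<open>mset ys \<subseteq># _\<close>] n
    by (simp add: ys_def gl)
  moreover have "bounded_convex_combination (1 / real K) G v (list_mean (take K ys))"
    using bounded_convex_combination_list_mean[of G "take K gl" v] \<open>finite G\<close> gl K(1,2)
      \<open>gl \<noteq> []\<close> set_take_subset[of K gl]
    by (simp add: ys_def take_map min_absorb1)
  moreover have "bounded_convex_combination (1 / real K) G v (list_mean (drop b ys))"
    using bounded_convex_combination_list_mean[of G "drop b gl" v] \<open>finite G\<close> gl K(1)
      set_drop_subset[of b gl]
    by (simp add: ys_def drop_map K_def)
  ultimately show ?thesis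
    unfolding K(3) by (rule bounded_convex_combination_between[rotated 2])
qed

theorem lemma1:
  fixes n b d t i k :: nat
    and A :: "nat set"
    and nr :: "nat \<Rightarrow> nat"
    and H :: "nat \<Rightarrow> nat \<Rightarrow> nat \<Rightarrow> real"
    and \<theta> :: "nat \<Rightarrow> real"
    and w y :: "nat \<Rightarrow> nat \<Rightarrow> nat \<Rightarrow> real"
    and x z :: "nat \<Rightarrow> nat \<Rightarrow> nat \<Rightarrow> real"
    and m :: "nat \<Rightarrow> nat \<Rightarrow> nat \<Rightarrow> nat \<Rightarrow> real"
  assumes nb: "2 * b < n"
    and A_sub: "A \<subseteq> {..<n}"
    and A_card: "card A \<le> b"
    and obs: "\<forall>j<n. j \<notin> A \<longrightarrow> (\<forall>s\<ge>1. \<forall>r<nr j.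
               y j s r = (\<Sum>c<d. H j r c * \<theta> c) + w j s r)"
    and z_def: "\<forall>j<n. j \<notin> A \<longrightarrow> (\<forall>s\<ge>1. \<forall>l<d.
               z j s l = x j (s - 1) l
                 - (\<Sum>r<nr j. H j r l * ((\<Sum>c<d. H j r c * x j (s - 1) c)
                                           - (\<Sum>q=1..s. y j q r) / real s)))"
    and msg: "\<forall>s\<ge>1. \<forall>j<n. \<forall>l<n. l \<notin> A \<longrightarrow> j \<notin> A \<longrightarrow> m s j l = z j s"
    and x_def: "\<forall>s\<ge>1. \<forall>l<n. l \<notin> A \<longrightarrow> (\<forall>c<d.
               x l s c = trimmed_mean b (map (\<lambda>j. m s j l c) [0..<n]))"
    and t: "t \<ge> 1" and i: "i < n" "i \<notin> A" and k: "k < d"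
  shows "\<exists>\<beta> :: nat \<Rightarrow> real.
           x i t k = (\<Sum>j\<in>{..<n} - A. \<beta> j * z j t k)
         \<and> (\<forall>j\<in>{..<n} - A. 0 \<le> \<beta> j \<and> \<beta> j \<le> 1 / (real (card ({..<n} - A)) - real b))
         \<and> (\<Sum>j\<in>{..<n} - A. \<beta> j) = 1"
proof -
  let ?G = "{..<n} - A"
  have "finite A"
    using A_sub finite_subset by blast
  with A_sub have "card ?G = n - card A"
    by (simp add: card_Diff_subset)
  then have "n \<le> card ?G + b"
    using A_card by simp
  then obtain \<beta> where \<beta>: "trimmed_mean b (map (\<lambda>j. m t j i k) [0..<n]) = (\<Sum>j\<in>?G. \<beta> j * m t j i k)"
      "\<forall>j\<in>?G. 0 \<le> \<beta> j \<and> \<beta> j \<le> 1 / (real (card ?G) - real b)" "(\<Sum>j\<in>?G. \<beta> j) = 1"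
    using trimmed_mean_bounded_convex_combination[of ?G n b "\<lambda>j. m t j i k"] nb
    unfolding bounded_convex_combination_def by auto
  have "x i t k = trimmed_mean b (map (\<lambda>j. m t j i k) [0..<n])"
    using x_def t i k by blast
  also have "\<dots> = (\<Sum>j\<in>?G. \<beta> j * z j t k)"
    unfolding \<beta>(1) using msg t i by (intro sum.cong) auto
  finally show ?thesis
    using \<beta>(2,3) by blast
qed

end
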